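(* Let $\mathfrak{g}$ be a $2$-dimensional non-abelian complex Lie algebra. Then every completion of the universal enveloping algebra $U(\mathfrak{g})$ with respect to a submultiplicative prenorm is a PI-algebra.
   Context: A submultiplicative prenorm on $U(\mathfrak{g})$ is a seminorm $p$ with $p(ab)\le p(a)p(b)$; the completion is the Banach algebra obtained by completing $U(\mathfrak{g})/\{a:p(a)=0\}$. An associative algebra is a PI-algebra if there is a nonzero non-commutative polynomial $p$ in finitely many variables with $p(a_1,\ldots,a_n)=0$ for all elements $a_i$ of the algebra. *)

theory Defs
  imports "HOL-Analysis.Analysis"
begin

definition complex_lie_algebra ::
  "(complex \<Rightarrow> 'g::ab_group_add \<Rightarrow> 'g) \<Rightarrow> ('g \<Rightarrow> 'g \<Rightarrow> 'g) \<Rightarrow> bool" where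
  "complex_lie_algebra sg br \<longleftrightarrow>
     vector_space sg \<and>
     (\<forall>x y z. br (x + y) z = br x z + br y z) \<and>
     (\<forall>x y z. br x (y + z) = br x y + br x z) \<and>
     (\<forall>c x y. br (sg c x) y = sg c (br x y)) \<and>
     (\<forall>c x y. br x (sg c y) = sg c (br x y)) \<and>
     (\<forall>x. br x x = 0) \<and>
     (\<forall>x y z. br x (br y z) + br y (br z x) + br z (br x y) = 0)"

text \<open>A complex Banach algebra is represented as a real Banach algebra type (norm
submultiplicative, complete) together with a complex scalar multiplication sc
extending the real one, compatible with the ring structure and with the norm.
The algebra need not satisfy norm 1 = 1 (completions of prenorms need not).\<close>

definition complex_banach_algebra_scale ::
  "(complex \<Rightarrow> 'b::{real_normed_algebra, banach} \<Rightarrow> 'b) \<Rightarrow> bool" where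
  "complex_banach_algebra_scale sc \<longleftrightarrow>
     (\<forall>r x. sc (complex_of_real r) x = r *\<^sub>R x) \<and>
     (\<forall>c d x. sc (c * d) x = sc c (sc d x)) \<and>
     (\<forall>c d x. sc (c + d) x = sc c x + sc d x) \<and>
     (\<forall>c x y. sc c (x + y) = sc c x + sc c y) \<and>
     (\<forall>c x y. sc c (x * y) = sc c x * y) \<and>
     (\<forall>c x y. sc c (x * y) = x * sc c y) \<and>
     (\<forall>c x. norm (sc c x) = cmod c * norm x)"

inductive_set gen_subalg ::
  "(complex \<Rightarrow> 'b::ring \<Rightarrow> 'b) \<Rightarrow> 'b \<Rightarrow> 'b set \<Rightarrow> 'b set"
  for sc e S where
  unit: "e \<in> gen_subalg sc e S"
| gen: "s \<in> S \<Longrightarrow> s \<in> gen_subalg sc e S"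
| add: "x \<in> gen_subalg sc e S \<Longrightarrow> y \<in> gen_subalg sc e S \<Longrightarrow> x + y \<in> gen_subalg sc e S"
| mult: "x \<in> gen_subalg sc e S \<Longrightarrow> y \<in> gen_subalg sc e S \<Longrightarrow> x * y \<in> gen_subalg sc e S"
| scale: "x \<in> gen_subalg sc e S \<Longrightarrow> sc c x \<in> gen_subalg sc e S"

text \<open>A noncommutative polynomial with complex coefficients is a finitely supported
function from words (lists of variable indices) to complex numbers; the word
[i1,...,ik] stands for the monomial X_i1 ... X_ik, the empty word for 1.\<close>

definition nc_monomial_eval :: "'b::ring \<Rightarrow> (nat \<Rightarrow> 'b) \<Rightarrow> nat list \<Rightarrow> 'b" where
  "nc_monomial_eval e a w = foldr (\<lambda>i m. a i * m) w e"

definition nc_poly_eval ::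
  "(complex \<Rightarrow> 'b::ring \<Rightarrow> 'b) \<Rightarrow> 'b \<Rightarrow> (nat list \<Rightarrow> complex) \<Rightarrow> (nat \<Rightarrow> 'b) \<Rightarrow> 'b" where
  "nc_poly_eval sc e f a = (\<Sum>w\<in>{w. f w \<noteq> 0}. sc (f w) (nc_monomial_eval e a w))"

definition is_PI_algebra :: "(complex \<Rightarrow> 'b::ring \<Rightarrow> 'b) \<Rightarrow> 'b \<Rightarrow> bool" where
  "is_PI_algebra sc e \<longleftrightarrow>
     (\<exists>f n. finite {w. f w \<noteq> 0} \<and> (\<exists>w. f w \<noteq> 0) \<and>
            (\<forall>w. f w \<noteq> 0 \<longrightarrow> set w \<subseteq> {..<n}) \<and>
            (\<forall>a. nc_poly_eval sc e f a = 0))"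

end

theory Submission
  imports Defs
begin

text \<open>A two-dimensional non-abelian Lie algebra has a basis x, y with [x, y] = y, and every
bracket is a multiple of y. In the completion B, put X = \<psi> x and Y = \<psi> y. On the dense
subalgebra A generated by the image of \<psi>, moving Y past an element of A stays inside A, so
every commutator of A lies in Y A and a product of k commutators lies in Y^k A. Since
X Y^n - Y^n X = n Y^n, the norm bound n \<parallel>Y^n\<parallel> \<le> 2 \<parallel>X\<parallel> \<parallel>Y^n\<parallel> forces Y^n = 0 for n > 2 \<parallel>X\<parallel>.
Hence the product [z_1, z_2] \<cdots> [z_(2k-1), z_2k] of k commutators vanishes on A for large k,
and by separate continuity in each variable and density of A it vanishes on B.\<close>

lemma complex_lie_algebra_bracket_swap:
  assumes "complex_lie_algebra sg br"
  shows "br y x = - br x y"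
proof -
  have addl: "\<And>x y z. br (x + y) z = br x z + br y z"
   and addr: "\<And>x y z. br x (y + z) = br x y + br x z"
   and alt: "\<And>x. br x x = 0"
    using assms unfolding complex_lie_algebra_def by blast+
  have "0 = br (x + y) (x + y)" by (simp add: alt)
  also have "\<dots> = br x x + br y x + (br x y + br y y)" by (simp only: addl addr)
  finally have "br x y + br y x = 0" by (simp add: alt add.commute)
  then show ?thesis by (metis minus_unique)
qed

lemma two_dim_lie_algebra_bracket_coords:
  fixes sg :: "complex \<Rightarrow> 'g::ab_group_add \<Rightarrow> 'g"
  assumes lie: "complex_lie_algebra sg br"
    and dim2: "vector_space.dim sg UNIV = 2"
  obtains u v where "\<And>z. \<exists>a b. z = sg a u + sg b v"
    and "\<And>a b c d. br (sg a u + sg b v) (sg c u + sg d v) = sg (a * d - b * c) (br u v)"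
proof -
  interpret vector_space sg using lie unfolding complex_lie_algebra_def by blast
  have addl: "\<And>x y z. br (x + y) z = br x z + br y z"
   and addr: "\<And>x y z. br x (y + z) = br x y + br x z"
   and scl: "\<And>c x y. br (sg c x) y = sg c (br x y)"
   and scr: "\<And>c x y. br x (sg c y) = sg c (br x y)"
   and alt: "\<And>x. br x x = 0"
    using lie unfolding complex_lie_algebra_def by blast+
  obtain B where B: "independent B" "UNIV \<subseteq> span B" "card B = 2"
    using basis_exists[of UNIV] dim2 by auto
  then obtain u v where uv: "B = {u, v}" by (metis card_2_iff)
  have "\<exists>a b. z = sg a u + sg b v" for z
  proof -
    have "z \<in> span {u, v}" using B uv by auto
    then obtain a where "z - sg a u \<in> span {v}" using span_breakdown_eq by blast
    then obtain b where "z - sg a u = sg b v" using span_singleton by auto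
    then have "z = sg a u + sg b v" by (simp add: algebra_simps)
    then show ?thesis by blast
  qed
  moreover have "br (sg a u + sg b v) (sg c u + sg d v) = sg (a * d - b * c) (br u v)" for a b c d
  proof -
    have "br (sg a u + sg b v) (sg c u + sg d v)
        = sg c (sg a (br u u) + sg b (br v u)) + sg d (sg a (br u v) + sg b (br v v))"
      by (simp only: addl addr scl scr)
    also have "\<dots> = sg (a * d) (br u v) - sg (b * c) (br u v)"
      unfolding complex_lie_algebra_bracket_swap[OF lie, of v u] alt
      by (simp add: scale_right_distrib mult.commute)
    finally show ?thesis by (simp add: scale_left_diff_distrib)
  qed
  ultimately show ?thesis using that by blast
qed

lemma two_dim_nonabelian_lie_algebra_normal_form:
  fixes sg :: "complex \<Rightarrow> 'g::ab_group_add \<Rightarrow> 'g"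
  assumes lie: "complex_lie_algebra sg br"
    and dim2: "vector_space.dim sg UNIV = 2"
    and nonab: "\<exists>x y. br x y \<noteq> 0"
  obtains x y where "br x y = y" and "\<And>z z'. \<exists>c. br z z' = sg c y"
proof -
  interpret vector_space sg using lie unfolding complex_lie_algebra_def by blast
  obtain u v where coords: "\<And>z. \<exists>a b. z = sg a u + sg b v"
    and bracket: "\<And>a b c d. br (sg a u + sg b v) (sg c u + sg d v) = sg (a * d - b * c) (br u v)"
    using two_dim_lie_algebra_bracket_coords[OF lie dim2] by blast
  define y where "y = br u v"
  have multiple: "\<exists>c. br z z' = sg c y" for z z'
    using coords[of z] coords[of z'] bracket unfolding y_def by blast
  have "y \<noteq> 0"
    using nonab multiple by force
  obtain \<alpha> \<beta> where y: "y = sg \<alpha> u + sg \<beta> v" using coords by blast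
  have ad_y: "br (sg p u + sg q v) y = sg (p * \<beta> - q * \<alpha>) y" for p q
    using bracket[of p q \<alpha> \<beta>] y unfolding y_def by simp
  show ?thesis
  proof (cases "\<beta> = 0")
    case False
    then have "br (sg (1 / \<beta>) u + sg 0 v) y = y" using ad_y[of "1 / \<beta>" 0] by simp
    then show ?thesis using that multiple by blast
  next
    case True
    then have "\<alpha> \<noteq> 0" using y \<open>y \<noteq> 0\<close> by auto
    then have "br (sg 0 u + sg (- 1 / \<alpha>) v) y = y" using ad_y[of 0 "- 1 / \<alpha>"] True by simp
    then show ?thesis using that multiple by blast
  qed
qed

text \<open>y^(n+1); the class real_normed_algebra has no 1, so ^ is unavailable.\<close>

fun pos_power :: "'a::times \<Rightarrow> nat \<Rightarrow> 'a" where
  "pos_power y 0 = y"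
| "pos_power y (Suc n) = pos_power y n * y"

lemma pos_power_commute: "y * pos_power y n = pos_power y n * (y :: 'a::semigroup_mult)"
  by (induction n) (simp_all add: mult.assoc[symmetric])

lemma commutator_pos_power:
  fixes x y :: "'a::real_algebra"
  assumes "x * y - y * x = y"
  shows "x * pos_power y n - pos_power y n * x = real (Suc n) *\<^sub>R pos_power y n"
proof (induction n)
  case 0
  then show ?case using assms by simp
next
  case (Suc n)
  have "x * pos_power y (Suc n) - pos_power y (Suc n) * x
      = (x * pos_power y n - pos_power y n * x) * y + pos_power y n * (x * y - y * x)"
    by (simp add: algebra_simps)
  also have "\<dots> = real (Suc (Suc n)) *\<^sub>R pos_power y (Suc n)"
    using Suc assms by (simp add: algebra_simps scaleR_2)
  finally show ?case .
qed

lemma pos_power_eq_0_if_commutator_eq: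
  fixes x y :: "'a::real_normed_algebra"
  assumes "x * y - y * x = y" and "real (Suc n) > 2 * norm x"
  shows "pos_power y n = 0"
proof (rule ccontr)
  assume nonzero: "pos_power y n \<noteq> 0"
  have "real (Suc n) * norm (pos_power y n) = norm (x * pos_power y n - pos_power y n * x)"
    using commutator_pos_power[OF assms(1), of n] by simp
  also have "\<dots> \<le> norm (x * pos_power y n) + norm (pos_power y n * x)"
    by (rule norm_triangle_ineq4)
  also have "\<dots> \<le> norm x * norm (pos_power y n) + norm (pos_power y n) * norm x"
    by (intro add_mono norm_mult_ineq)
  finally have "real (Suc n) \<le> 2 * norm x" using nonzero by simp
  then show False using assms(2) by simp
qed

lemma vanishing_on_dense_tuples:
  fixes F :: "(nat \<Rightarrow> 'a::topological_space) \<Rightarrow> 'c::t2_space"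
  assumes dense: "closure A = UNIV"
    and cont: "\<And>a m. continuous_on UNIV (\<lambda>v. F (a(m := v)))"
    and local: "\<And>a b. (\<And>i. i < n \<Longrightarrow> a i = b i) \<Longrightarrow> F a = F b"
    and vanish: "\<And>a. range a \<subseteq> A \<Longrightarrow> F a = c"
  shows "F a = c"
proof -
  have tail: "F a = c" if "\<And>i. m \<le> i \<Longrightarrow> a i \<in> A" for m a
    using that
  proof (induction m arbitrary: a)
    case 0
    then show ?case by (intro vanish) auto
  next
    case (Suc m)
    have "A \<subseteq> {v. F (a(m := v)) = c}"
    proof
      fix v assume "v \<in> A"
      with Suc.prems have "(a(m := v)) i \<in> A" if "m \<le> i" for i
        using that by (cases "i = m") simp_all
      then show "v \<in> {v. F (a(m := v)) = c}" using Suc.IH by blast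
    qed
    moreover have "closed {v. F (a(m := v)) = c}"
      by (rule closed_Collect_eq[OF cont continuous_on_const])
    ultimately have "closure A \<subseteq> {v. F (a(m := v)) = c}"
      by (rule closure_minimal)
    then have "F (a(m := a m)) = c" using dense by blast
    then show ?case by simp
  qed
  obtain a\<^sub>0 where "a\<^sub>0 \<in> A" using dense closure_empty by (metis UNIV_not_empty ex_in_conv)
  then have "F (\<lambda>i. if i < n then a i else a\<^sub>0) = c"
    by (intro tail[of n]) simp
  moreover have "F a = F (\<lambda>i. if i < n then a i else a\<^sub>0)"
    by (rule local) simp
  ultimately show ?thesis by simp
qed

fun comm_prod :: "'b::ring \<Rightarrow> nat \<Rightarrow> (nat \<Rightarrow> 'b) \<Rightarrow> 'b" where
  "comm_prod e 0 a = e"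
| "comm_prod e (Suc k) a = (a (2*k) * a (2*k+1) - a (2*k+1) * a (2*k)) * comm_prod e k a"

fun comm_prod_poly :: "nat \<Rightarrow> nat list \<Rightarrow> complex" where
  "comm_prod_poly 0 w = (if w = [] then 1 else 0)"
| "comm_prod_poly (Suc k) w = (case w of
      i # j # r \<Rightarrow> (if i = 2*k \<and> j = 2*k+1 then comm_prod_poly k r else 0)
                 - (if i = 2*k+1 \<and> j = 2*k then comm_prod_poly k r else 0)
    | _ \<Rightarrow> 0)"

fun comm_prod_word :: "nat \<Rightarrow> nat list" where
  "comm_prod_word 0 = []"
| "comm_prod_word (Suc k) = 2*k # (2*k+1) # comm_prod_word k"

lemma comm_prod_poly_word: "comm_prod_poly k (comm_prod_word k) = 1"
  by (induction k) auto

lemma comm_prod_poly_support_Suc: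
  "{w. comm_prod_poly (Suc k) w \<noteq> 0} \<subseteq>
     (\<lambda>w. 2*k # (2*k+1) # w) ` {w. comm_prod_poly k w \<noteq> 0}
   \<union> (\<lambda>w. (2*k+1) # 2*k # w) ` {w. comm_prod_poly k w \<noteq> 0}"
proof
  fix w assume "w \<in> {w. comm_prod_poly (Suc k) w \<noteq> 0}"
  then have nonzero: "comm_prod_poly (Suc k) w \<noteq> 0" by simp
  then obtain i j r where "w = i # j # r" by (auto split: list.splits)
  with nonzero show "w \<in> (\<lambda>w. 2*k # (2*k+1) # w) ` {w. comm_prod_poly k w \<noteq> 0}
      \<union> (\<lambda>w. (2*k+1) # 2*k # w) ` {w. comm_prod_poly k w \<noteq> 0}"
    by (auto split: if_splits)
qed

lemma finite_comm_prod_poly_support: "finite {w. comm_prod_poly k w \<noteq> 0}"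
proof (induction k)
  case 0
  have "{w. comm_prod_poly 0 w \<noteq> 0} = {[]}" by auto
  then show ?case by simp
next
  case (Suc k)
  show ?case by (rule finite_subset[OF comm_prod_poly_support_Suc]) (simp add: Suc)
qed

lemma comm_prod_poly_vars: "comm_prod_poly k w \<noteq> 0 \<Longrightarrow> set w \<subseteq> {..<2*k}"
proof (induction k arbitrary: w)
  case 0
  then show ?case by (auto split: if_splits)
next
  case (Suc k)
  then show ?case using comm_prod_poly_support_Suc[of k] by fastforce
qed

lemma comm_prod_local: "(\<And>i. i < 2*k \<Longrightarrow> a i = b i) \<Longrightarrow> comm_prod e k a = comm_prod e k b"
  by (induction k) auto

lemma continuous_on_comm_prod_upd:
  fixes a :: "nat \<Rightarrow> 'b::real_normed_algebra"
  shows "continuous_on UNIV (\<lambda>v. comm_prod e k (a(m := v)))"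
proof (induction k)
  case 0
  then show ?case by simp
next
  case (Suc k)
  have upd: "continuous_on UNIV (\<lambda>v. (a(m := v)) i)" for i
    by (cases "i = m") simp_all
  show ?case unfolding comm_prod.simps
    by (intro continuous_on_mult continuous_on_diff upd Suc)
qed

locale complex_banach_algebra =
  fixes sc :: "complex \<Rightarrow> 'b::{real_normed_algebra, banach} \<Rightarrow> 'b"
  assumes scale: "complex_banach_algebra_scale sc"
begin

lemma sc_of_real: "sc (complex_of_real r) x = r *\<^sub>R x"
  and sc_add_left: "sc (c + d) x = sc c x + sc d x"
  and sc_add_right: "sc c (x + y) = sc c x + sc c y"
  and sc_mult_left: "sc c (x * y) = sc c x * y"
  and sc_mult_right: "sc c (x * y) = x * sc c y"
  using scale unfolding complex_banach_algebra_scale_def by blast+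

lemma sc_zero_left [simp]: "sc 0 x = 0"
  using sc_of_real[of 0 x] by simp

lemma sc_one [simp]: "sc 1 x = x"
  using sc_of_real[of 1 x] by simp

lemma sc_minus_left: "sc (- c) x = - sc c x"
  using sc_add_left[of c "- c" x] by (simp add: add_eq_0_iff2)

lemma sc_diff_right: "sc c (x - y) = sc c x - sc c y"
  using sc_add_right[of c "x - y" y] by (simp add: eq_diff_eq)

lemma nc_poly_eval_superset:
  assumes "finite U" "{w. f w \<noteq> 0} \<subseteq> U"
  shows "nc_poly_eval sc e f a = (\<Sum>w\<in>U. sc (f w) (nc_monomial_eval e a w))"
  unfolding nc_poly_eval_def by (rule sum.mono_neutral_left[OF assms]) auto

lemma nc_poly_eval_comm_prod_poly: "nc_poly_eval sc e (comm_prod_poly k) a = comm_prod e k a"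
proof (induction k)
  case 0
  have "{w. comm_prod_poly 0 w \<noteq> 0} = {[]}" by auto
  then show ?case by (simp add: nc_poly_eval_def nc_monomial_eval_def)
next
  case (Suc k)
  define T where "T = {w. comm_prod_poly k w \<noteq> 0}"
  define p1 where "p1 = (\<lambda>w. 2*k # (2*k+1) # w)"
  define p2 where "p2 = (\<lambda>w::nat list. (2*k+1) # 2*k # w)"
  define m where "m = nc_monomial_eval e a"
  define P where "P = (\<Sum>t\<in>T. sc (comm_prod_poly k t) (m t))"
  have P: "P = comm_prod e k a"
    using Suc unfolding P_def T_def m_def nc_poly_eval_def by simp
  have "finite T" unfolding T_def by (rule finite_comm_prod_poly_support)
  have m_Cons2: "m (i # j # t) = a i * (a j * m t)" for i j t
    unfolding m_def nc_monomial_eval_def by simp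
  have "nc_poly_eval sc e (comm_prod_poly (Suc k)) a
      = (\<Sum>w\<in>p1 ` T \<union> p2 ` T. sc (comm_prod_poly (Suc k) w) (m w))"
    unfolding m_def
    by (rule nc_poly_eval_superset)
      (use \<open>finite T\<close> comm_prod_poly_support_Suc in \<open>auto simp: T_def p1_def p2_def\<close>)
  also have "\<dots> = (\<Sum>w\<in>p1 ` T. sc (comm_prod_poly (Suc k) w) (m w))
                 + (\<Sum>w\<in>p2 ` T. sc (comm_prod_poly (Suc k) w) (m w))"
    by (rule sum.union_disjoint) (auto simp: \<open>finite T\<close> p1_def p2_def)
  also have "(\<Sum>w\<in>p1 ` T. sc (comm_prod_poly (Suc k) w) (m w)) = a (2*k) * (a (2*k+1) * P)"
    unfolding P_def
    by (subst sum.reindex) (auto simp: inj_on_def p1_def m_Cons2 sc_mult_right sum_distrib_left)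
  also have "(\<Sum>w\<in>p2 ` T. sc (comm_prod_poly (Suc k) w) (m w)) = - (a (2*k+1) * (a (2*k) * P))"
    unfolding P_def
    by (subst sum.reindex)
      (auto simp: inj_on_def p2_def m_Cons2 sc_mult_right sc_minus_left sum_distrib_left sum_negf)
  finally show ?case using P by (simp add: algebra_simps)
qed

end

locale commutators_on_line = complex_banach_algebra sc
  for sc :: "complex \<Rightarrow> 'b::{real_normed_algebra, banach} \<Rightarrow> 'b" +
  fixes e :: 'b and S :: "'b set" and Y :: 'b
  assumes unit_left [simp]: "e * x = x" and unit_right [simp]: "x * e = x"
    and Y_in_S: "Y \<in> S"
    and commutator_S: "s \<in> S \<Longrightarrow> t \<in> S \<Longrightarrow> \<exists>c. s * t - t * s = sc c Y"
begin

abbreviation A where "A \<equiv> gen_subalg sc e S"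

lemma scale_unit_in_A: "sc c e \<in> A"
  by (rule gen_subalg.scale[OF gen_subalg.unit])

lemma zero_in_A: "0 \<in> A"
  using scale_unit_in_A[of 0] by simp

lemma uminus_in_A: "x \<in> A \<Longrightarrow> - x \<in> A"
  using gen_subalg.scale[of x sc e S "- 1"] by (simp add: sc_minus_left)

lemma commutator_S_in_YA: "s \<in> S \<Longrightarrow> t \<in> S \<Longrightarrow> \<exists>d\<in>A. s * t - t * s = Y * d"
  using commutator_S sc_mult_right[of _ Y e] scale_unit_in_A by fastforce

lemma mult_Y_swap: "a \<in> A \<Longrightarrow> \<exists>a'\<in>A. a * Y = Y * a'"
proof (induction a rule: gen_subalg.induct)
  case unit
  then show ?case using gen_subalg.unit by force
next
  case (gen s)
  obtain d where d: "d \<in> A" "s * Y - Y * s = Y * d"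
    using commutator_S_in_YA[OF gen Y_in_S] by blast
  then have "s * Y = Y * (s + d)" by (metis diff_eq_eq distrib_left add.commute)
  then show ?case using gen_subalg.add[OF gen_subalg.gen[OF gen] d(1)] by blast
next
  case (add x y)
  then show ?case by (metis distrib_left distrib_right gen_subalg.add)
next
  case (mult x y)
  then show ?case by (metis mult.assoc gen_subalg.mult)
next
  case (scale x c)
  then show ?case by (metis sc_mult_left sc_mult_right gen_subalg.scale)
qed

lemma mult_pos_power_Y_swap: "a \<in> A \<Longrightarrow> \<exists>a'\<in>A. a * pos_power Y n = pos_power Y n * a'"
proof (induction n arbitrary: a)
  case 0
  then show ?case using mult_Y_swap by simp
next
  case (Suc n)
  obtain a1 where a1: "a1 \<in> A" "a * pos_power Y n = pos_power Y n * a1" using Suc by blast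
  obtain a2 where a2: "a2 \<in> A" "a1 * Y = Y * a2" using mult_Y_swap a1 by blast
  have "a * pos_power Y (Suc n) = pos_power Y n * (a1 * Y)"
    using a1 by (simp add: mult.assoc[symmetric])
  also have "\<dots> = pos_power Y (Suc n) * a2" using a2 by (simp add: mult.assoc)
  finally show ?case using a2 by blast
qed

text \<open>Since Y A is stable under left multiplication by A (after swapping with Y) and under right
multiplication, the elements whose commutators with A lie in Y A form an algebra, via
[t, x y] = [t, x] y + x [t, y].\<close>

lemma commutator_in_YA_of_generators:
  assumes t: "\<And>s. s \<in> S \<Longrightarrow> \<exists>d\<in>A. t * s - s * t = Y * d"
  shows "b \<in> A \<Longrightarrow> \<exists>d\<in>A. t * b - b * t = Y * d"
proof (induction b rule: gen_subalg.induct)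
  case unit
  then show ?case using zero_in_A by force
next
  case (gen s)
  then show ?case using t by blast
next
  case (add x y)
  then obtain d1 d2 where "d1 \<in> A" "d2 \<in> A" "t * x - x * t = Y * d1" "t * y - y * t = Y * d2"
    by blast
  then have "t * (x + y) - (x + y) * t = Y * (d1 + d2)" by (simp add: algebra_simps)
  then show ?case using gen_subalg.add[OF \<open>d1 \<in> A\<close> \<open>d2 \<in> A\<close>] by blast
next
  case (mult x y)
  then obtain d1 d2 where d: "d1 \<in> A" "d2 \<in> A" "t * x - x * t = Y * d1" "t * y - y * t = Y * d2"
    by blast
  obtain x' where x': "x' \<in> A" "x * Y = Y * x'" using mult_Y_swap mult by blast
  have "t * (x * y) - (x * y) * t = (t * x - x * t) * y + x * (t * y - y * t)"
    by (simp add: algebra_simps)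
  also have "\<dots> = Y * (d1 * y + x' * d2)" by (metis d(3,4) x'(2) distrib_left mult.assoc)
  finally show ?case
    using gen_subalg.add[OF gen_subalg.mult[OF d(1) mult(2)] gen_subalg.mult[OF x'(1) d(2)]]
    by blast
next
  case (scale x c)
  then obtain d where d: "d \<in> A" "t * x - x * t = Y * d" by blast
  have "t * sc c x - sc c x * t = sc c (t * x - x * t)"
    by (metis sc_diff_right sc_mult_left sc_mult_right)
  also have "\<dots> = Y * sc c d" using d sc_mult_right by simp
  finally show ?case using gen_subalg.scale[OF d(1)] by blast
qed

lemma commutator_in_YA:
  assumes "a \<in> A" "b \<in> A"
  shows "\<exists>d\<in>A. a * b - b * a = Y * d"
proof (rule commutator_in_YA_of_generators[OF _ assms(2)])
  fix s assume "s \<in> S"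
  then obtain d where "d \<in> A" "s * a - a * s = Y * d"
    using commutator_in_YA_of_generators[OF commutator_S_in_YA assms(1)] by blast
  then have "a * s - s * a = Y * (- d)" "- d \<in> A"
    by (metis minus_diff_eq mult_minus_right, simp add: uminus_in_A)
  then show "\<exists>d\<in>A. a * s - s * a = Y * d" by blast
qed

lemma comm_prod_in_pos_power_YA:
  assumes "range a \<subseteq> A"
  shows "\<exists>d\<in>A. comm_prod e (Suc k) a = pos_power Y k * d"
proof (induction k)
  case 0
  have "a 0 \<in> A" "a 1 \<in> A" using assms by auto
  then show ?case using commutator_in_YA by simp
next
  case (Suc k)
  then obtain d where d: "d \<in> A" "comm_prod e (Suc k) a = pos_power Y k * d" by blast
  obtain d' where d': "d' \<in> A"
      "a (2 * Suc k) * a (2 * Suc k + 1) - a (2 * Suc k + 1) * a (2 * Suc k) = Y * d'"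
    using commutator_in_YA assms by blast
  obtain d'' where d'': "d'' \<in> A" "d' * pos_power Y k = pos_power Y k * d''"
    using mult_pos_power_Y_swap d' by blast
  have "comm_prod e (Suc (Suc k)) a = Y * (d' * pos_power Y k) * d"
    using d d' by (simp add: mult.assoc)
  also have "\<dots> = pos_power Y (Suc k) * (d'' * d)"
    using d'' by (simp add: pos_power_commute flip: mult.assoc)
  finally show ?case using gen_subalg.mult[OF d''(1) d(1)] by blast
qed

lemma is_PI_algebra_if_dense:
  assumes XY: "X * Y - Y * X = Y"
    and dense: "closure A = UNIV"
  shows "is_PI_algebra sc e"
proof -
  define k where "k = nat \<lceil>2 * norm X\<rceil>"
  have "real (Suc k) > 2 * norm X" unfolding k_def by linarith
  then have "pos_power Y k = 0" by (rule pos_power_eq_0_if_commutator_eq[OF XY])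
  then have vanish_A: "comm_prod e (Suc k) a = 0" if "range a \<subseteq> A" for a
    using comm_prod_in_pos_power_YA[OF that, of k] by (force simp del: comm_prod.simps)
  have vanish: "comm_prod e (Suc k) a = 0" for a
    by (rule vanishing_on_dense_tuples[OF dense continuous_on_comm_prod_upd comm_prod_local vanish_A])
  have "finite {w. comm_prod_poly (Suc k) w \<noteq> 0}"
    by (rule finite_comm_prod_poly_support)
  moreover have "comm_prod_poly (Suc k) (comm_prod_word (Suc k)) \<noteq> 0"
    using comm_prod_poly_word[of "Suc k"] by (metis one_neq_zero)
  moreover have "\<forall>w. comm_prod_poly (Suc k) w \<noteq> 0 \<longrightarrow> set w \<subseteq> {..<2 * Suc k}"
    using comm_prod_poly_vars by blast
  moreover have "\<forall>a. nc_poly_eval sc e (comm_prod_poly (Suc k)) a = 0"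
    by (simp only: nc_poly_eval_comm_prod_poly vanish simp_thms)
  ultimately show ?thesis unfolding is_PI_algebra_def by blast
qed

end

theorem proposition3:
  fixes sg :: "complex \<Rightarrow> 'g::ab_group_add \<Rightarrow> 'g"
    and br :: "'g \<Rightarrow> 'g \<Rightarrow> 'g"
    and sc :: "complex \<Rightarrow> 'b::{real_normed_algebra, banach} \<Rightarrow> 'b"
    and e :: 'b
    and \<psi> :: "'g \<Rightarrow> 'b"
  assumes lie: "complex_lie_algebra sg br"
    and dim2: "vector_space.dim sg UNIV = 2"
    and nonab: "\<exists>x y. br x y \<noteq> 0"
    and cba: "complex_banach_algebra_scale sc"
    and unit: "\<forall>x. e * x = x \<and> x * e = x"
    and add: "\<forall>x y. \<psi> (x + y) = \<psi> x + \<psi> y"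
    and lin: "\<forall>c x. \<psi> (sg c x) = sc c (\<psi> x)"
    and bracket: "\<forall>x y. \<psi> (br x y) = \<psi> x * \<psi> y - \<psi> y * \<psi> x"
    and dense: "closure (gen_subalg sc e (range \<psi>)) = UNIV"
  shows "is_PI_algebra sc e"
proof -
  obtain x y where xy: "br x y = y" and line: "\<And>z z'. \<exists>c. br z z' = sg c y"
    using two_dim_nonabelian_lie_algebra_normal_form[OF lie dim2 nonab] by blast
  interpret commutators_on_line sc e "range \<psi>" "\<psi> y"
  proof unfold_locales
    fix s t assume "s \<in> range \<psi>" "t \<in> range \<psi>"
    then obtain z z' where "s = \<psi> z" "t = \<psi> z'" by blast
    moreover obtain c where "br z z' = sg c y" using line by blast
    ultimately show "\<exists>c. s * t - t * s = sc c (\<psi> y)" using bracket lin by metis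
  qed (use cba unit in simp_all)
  have "\<psi> x * \<psi> y - \<psi> y * \<psi> x = \<psi> y" using bracket xy by metis
  then show ?thesis using dense by (rule is_PI_algebra_if_dense)
qed

end
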